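(* Let $T$ be a filtered deterministic transducer with input category $\mathcal{C}$, output category $\mathcal{D}$, structure functor $F:\mathcal{C}\to\mathcal{D}^S$, primary input $\mathcal{C}$-signature $X\to Y$, auxiliary input $\mathcal{D}$-signatures $X_1\to Y_1,\dots,X_n\to Y_n$, output $\mathcal{D}$-signatures $X_1'\to Y_1',\dots,X_m'\to Y_m'$, input state space $S(F(X))$ and output state space $S(F(Y))$. Suppose that $S(F(Y))$ is finite, and that for every $x\in S(F(X))$ the linear coefficient $a$ of the degree $ax+b$ of every variable in $V_{F(X)}(x)$ is nonzero. Then there is a fixed integer $k$, not depending on $\deg(\alpha)$, such that for every $x\in S(F(X))$ and every primary input morphism $\alpha:X\to Y$ in $\mathcal{C}$, in each of the morphisms assigned by the output function $V_{F(\alpha)}(x)$ to the output signatures $X_j'\to Y_j'$ (which are variables at the state $S(F(\alpha))(x)$), the number of copies of the free generator corresponding to each auxiliary input $X_i\to Y_i$ is at most $k$.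
   Context: A filtered-morphism category is a locally small symmetric monoidal (here also copy-discard) category in which every morphism $f$ has a degree $\deg(f)\in\mathbb{N}$, identities have degree $0$, and $\deg(g\circ f)\le\deg(g)+\deg(f)$ (i.e. it is enriched over filtered sets, where a filtered set is a set with a function to $\mathbb{N}$ and morphisms are degree-non-increasing functions, with monoidal product the cartesian product with degrees added). Linear polynomials $ax+b$ with $a,b\in\mathbb{N}$ are partially ordered by $ax+b\le cx+d$ iff $a\le c$ and $b\le d$. Given a filtered-morphism category $\mathcal{D}$ and a list of signatures $X_i\to Y_i$ with degrees $a_ix+b_i$, the freely-generated $\mathbb{N}^2$-filtered category $\mathcal{D}[X_1\to Y_1,\dots]$ has the objects of $\mathcal{D}$, and morphisms built by composing and taking monoidal products of $\mathcal{D}$-morphisms and free generators $X_i\to Y_i$; the degree of such a morphism is the linear polynomial equal to the sum of the degrees $a_ix+b_i$ of the generator occurrences plus the ($\mathcal{D}$-)degrees of the maximal $\mathcal{D}$-parts (as constants). The filtered state category $\mathcal{D}^S$: an object $A$ consists of a set $S(A)$ (state space) and, for each $s\in S(A)$, a finite ordered list $V_A(s)$ of variables, i.e. pairs of $\mathcal{D}$-objects written $X\to Y$, each with a degree $ax+b$, $a,b\in\mathbb{N}$. A morphism $f:A\to B$ of degree $\ell\in\mathbb{N}$ consists of a function $S(f):S(A)\to S(B)$ (state transition) and, for each $s\in S(A)$, an output function $V_f(s)$ assigning to each variable $X'\to Y'$ at $S(f)(s)$ of degree $a'x+b'$ a morphism $X'\to Y'$ in the free $\mathbb{N}^2$-filtered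 category over $\mathcal{D}$ generated by the variables at $s$ (with their degrees), of degree at most $a'x+(a'\ell+b')$. Substituting actual $\mathcal{D}$-morphisms for the generators gives output $\mathcal{D}$-morphisms. Composition composes state transitions and substitutes output functions; the monoidal product takes products of state spaces and concatenates variable lists. A filtered functor is a functor $F$ between filtered-morphism categories with $\deg F(\alpha)\le\deg(\alpha)$ for all morphisms $\alpha$. A filtered deterministic transducer consists of filtered-morphism copy-discard categories $\mathcal{C}$ (input) and $\mathcal{D}$ (output), a primary input $\mathcal{C}$-signature $X\to Y$, auxiliary input $\mathcal{D}$-signatures $X_1\to Y_1,\dots,X_n\to Y_n$, output $\mathcal{D}$-signatures $X'_1\to Y'_1,\dots,X'_m\to Y'_m$, and a strong monoidal filtered functor $F:\mathcal{C}\to\mathcal{D}^S$ such that for every $s\in S(F(X))$ the variables at $s$ form a prefix of $X_1\to Y_1,\dots,X_n\to Y_n$, and for every $t\in S(F(Y))$ the list $X'_1\to Y'_1,\dots,X'_m\to Y'_m$ is a prefix of the variables at $t$. Given an input state $s\in S(F(X))$, a primary input $\alpha:X\to Y$ and auxiliary input morphisms $\beta_i:X_i\to Y_i$, the transducer outputs the state $S(F(\alpha))(s)$ and, for each output signature, the morphism assigned by $V_{F(\alpha)}(s)$ with the generators replaced by the $\beta_i$. *)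

theory Defs
  imports Main "HOL-Library.Sublist"
begin

text \<open>
  Output category D (filtered-morphism symmetric monoidal category), given by its data:
  objects of type 'o, morphisms of type 'm, with domain, codomain, composition
  (compD g f = g after f), monoidal product on morphisms and objects, and degrees.
\<close>

record ('o, 'm) fcat =
  domD  :: "'m \<Rightarrow> 'o"
  codD  :: "'m \<Rightarrow> 'o"
  compD :: "'m \<Rightarrow> 'm \<Rightarrow> 'm"
  tensD :: "'m \<Rightarrow> 'm \<Rightarrow> 'm"
  tensO :: "'o \<Rightarrow> 'o \<Rightarrow> 'o"
  degD  :: "'m \<Rightarrow> nat"

definition filtered_cat :: "('o, 'm) fcat \<Rightarrow> bool" where
  "filtered_cat D \<longleftrightarrow>
     (\<forall>f g. codD D f = domD D g \<longrightarrow>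
        domD D (compD D g f) = domD D f \<and> codD D (compD D g f) = codD D g \<and>
        degD D (compD D g f) \<le> degD D g + degD D f) \<and>
     (\<forall>f g. domD D (tensD D f g) = tensO D (domD D f) (domD D g) \<and>
        codD D (tensD D f g) = tensO D (codD D f) (codD D g) \<and>
        degD D (tensD D f g) \<le> degD D f + degD D g)"

text \<open>A variable: a pair of D-objects X \<rightarrow> Y together with a degree a x + b,
  written (X, Y, a, b).\<close>
type_synonym 'o var = "'o \<times> 'o \<times> nat \<times> nat"

text \<open>Morphism expressions of the free N^2-filtered category D[vars]:
  D-morphisms, free generators (by index into the variable list),
  composition (FComp u t = u after t) and monoidal product.\<close>
datatype 'm fterm = DM 'm | Gen nat | FComp "'m fterm" "'m fterm" | FTens "'m fterm" "'m fterm"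

inductive wt :: "('o, 'm) fcat \<Rightarrow> 'o var list \<Rightarrow> 'm fterm \<Rightarrow> 'o \<Rightarrow> 'o \<Rightarrow> bool"
  for D vs where
  wt_DM: "wt D vs (DM f) (domD D f) (codD D f)"
| wt_Gen: "i < length vs \<Longrightarrow> vs ! i = (X, Y, a, b) \<Longrightarrow> wt D vs (Gen i) X Y"
| wt_Comp: "wt D vs t X Z \<Longrightarrow> wt D vs u Z Y \<Longrightarrow> wt D vs (FComp u t) X Y"
| wt_Tens: "wt D vs t X1 Y1 \<Longrightarrow> wt D vs u X2 Y2 \<Longrightarrow>
            wt D vs (FTens t u) (tensO D X1 X2) (tensO D Y1 Y2)"

fun noGen :: "'m fterm \<Rightarrow> bool" where
  "noGen (DM f) = True"
| "noGen (Gen i) = False"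
| "noGen (FComp u t) = (noGen u \<and> noGen t)"
| "noGen (FTens t u) = (noGen t \<and> noGen u)"

fun evalD :: "('o, 'm) fcat \<Rightarrow> 'm fterm \<Rightarrow> 'm" where
  "evalD D (DM f) = f"
| "evalD D (Gen i) = undefined"
| "evalD D (FComp u t) = compD D (evalD D u) (evalD D t)"
| "evalD D (FTens t u) = tensD D (evalD D t) (evalD D u)"

text \<open>Degree (a, b) standing for a x + b: sum of the degrees of the generator occurrences
  plus the D-degrees of the maximal D-parts (as constants).\<close>
fun fdeg :: "('o, 'm) fcat \<Rightarrow> 'o var list \<Rightarrow> 'm fterm \<Rightarrow> nat \<times> nat" where
  "fdeg D vs t =
    (if noGen t then (0, degD D (evalD D t)) else
     (case t of
        Gen i \<Rightarrow> (case vs ! i of (X, Y, a, b) \<Rightarrow> (a, b))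
      | FComp u s \<Rightarrow> (fst (fdeg D vs u) + fst (fdeg D vs s), snd (fdeg D vs u) + snd (fdeg D vs s))
      | FTens s u \<Rightarrow> (fst (fdeg D vs s) + fst (fdeg D vs u), snd (fdeg D vs s) + snd (fdeg D vs u))
      | DM f \<Rightarrow> (0, degD D f)))"

definition lin_le :: "nat \<times> nat \<Rightarrow> nat \<times> nat \<Rightarrow> bool" where
  "lin_le p q \<longleftrightarrow> fst p \<le> fst q \<and> snd p \<le> snd q"

fun gen_count :: "nat \<Rightarrow> 'm fterm \<Rightarrow> nat" where
  "gen_count i (DM f) = 0"
| "gen_count i (Gen j) = (if i = j then 1 else 0)"
| "gen_count i (FComp u t) = gen_count i u + gen_count i t"
| "gen_count i (FTens t u) = gen_count i t + gen_count i u"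

text \<open>A morphism A \<rightarrow> B of degree l in the filtered state category D^S, where
  A = (SA, VA) and B = (SB, VB); tr is the state transition and out s j the output
  assigned to the j-th variable at tr s.\<close>
definition DS_mor ::
  "('o, 'm) fcat \<Rightarrow> 's set \<Rightarrow> ('s \<Rightarrow> 'o var list) \<Rightarrow> 't set \<Rightarrow> ('t \<Rightarrow> 'o var list)
   \<Rightarrow> ('s \<Rightarrow> 't) \<Rightarrow> ('s \<Rightarrow> nat \<Rightarrow> 'm fterm) \<Rightarrow> nat \<Rightarrow> bool" where
  "DS_mor D SA VA SB VB tr out l \<longleftrightarrow>
     (\<forall>s\<in>SA. tr s \<in> SB \<and>
        (\<forall>j < length (VB (tr s)).
           (case VB (tr s) ! j of (X', Y', a', b') \<Rightarrow>
              wt D (VA s) (out s j) X' Y' \<and>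
              lin_le (fdeg D (VA s) (out s j)) (a', a' * l + b'))))"

definition sig_of :: "'o var \<Rightarrow> 'o \<times> 'o" where
  "sig_of v = (case v of (X, Y, a, b) \<Rightarrow> (X, Y))"

text \<open>The data of a filtered deterministic transducer, as far as the primary input
  signature X \<rightarrow> Y is concerned: HomXY is the set of C-morphisms X \<rightarrow> Y with C-degrees
  degC; S(F X) = SX with variables VX; S(F Y) = SY with variables VY; F(alpha) has
  state transition Ftr alpha and output function Fout alpha, and is a D^S morphism of
  degree at most deg alpha (F filtered); aux and outs are the auxiliary input and output
  D-signatures.\<close>
definition transducer ::
  "('o, 'm) fcat \<Rightarrow> 'c set \<Rightarrow> ('c \<Rightarrow> nat) \<Rightarrow> 's set \<Rightarrow> ('s \<Rightarrow> 'o var list)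
   \<Rightarrow> 't set \<Rightarrow> ('t \<Rightarrow> 'o var list) \<Rightarrow> ('c \<Rightarrow> 's \<Rightarrow> 't) \<Rightarrow> ('c \<Rightarrow> 's \<Rightarrow> nat \<Rightarrow> 'm fterm)
   \<Rightarrow> ('o \<times> 'o) list \<Rightarrow> ('o \<times> 'o) list \<Rightarrow> bool" where
  "transducer D HomXY degC SX VX SY VY Ftr Fout aux outs \<longleftrightarrow>
     filtered_cat D \<and>
     (\<forall>\<alpha>\<in>HomXY. \<exists>l \<le> degC \<alpha>. DS_mor D SX VX SY VY (Ftr \<alpha>) (Fout \<alpha>) l) \<and>
     (\<forall>s\<in>SX. prefix (map sig_of (VX s)) aux) \<and>
     (\<forall>t\<in>SY. prefix outs (map sig_of (VY t)))"

end

theory Submission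
  imports Defs
begin

text \<open>Every free generator has a degree a x + b with a \<ge> 1, and linear coefficients add up
  along an expression, so the number of copies of any generator is at most the linear
  coefficient of the degree of the expression. For the outputs of F(\<alpha>) this coefficient is
  bounded by the linear coefficient a' of the output variable, since the degree bound
  a' x + (a' l + b') only shifts the constant term with l = deg F(\<alpha>). Hence the count is
  bounded by the largest a' over the finitely many output states and output signatures.\<close>

text \<open>The defining equation of fdeg applies to every expression, so as a simplification rule
  it makes automation loop; only its instances are used.\<close>
declare fdeg.simps [simp del]

lemma fst_fdeg_eq_0_if_noGen: "noGen t \<Longrightarrow> fst (fdeg D vs t) = 0"
  by (simp add: fdeg.simps)

lemma fst_fdeg_Gen: "fst (fdeg D vs (Gen i)) = fst (snd (snd (vs ! i)))"
  by (simp add: fdeg.simps split: prod.split)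

lemma fst_fdeg_FComp: "fst (fdeg D vs (FComp u t)) = fst (fdeg D vs u) + fst (fdeg D vs t)"
  by (cases "noGen (FComp u t)")
    (auto simp: fdeg.simps[of D vs "FComp u t"] fst_fdeg_eq_0_if_noGen)

lemma fst_fdeg_FTens: "fst (fdeg D vs (FTens t u)) = fst (fdeg D vs t) + fst (fdeg D vs u)"
  by (cases "noGen (FTens t u)")
    (auto simp: fdeg.simps[of D vs "FTens t u"] fst_fdeg_eq_0_if_noGen)

lemma gen_count_le_fst_fdeg:
  assumes "wt D vs t X Y"
    and "\<forall>v\<in>set vs. (case v of (X, Y, a, b) \<Rightarrow> a \<noteq> 0)"
  shows "gen_count i t \<le> fst (fdeg D vs t)"
  using assms
proof (induction rule: wt.induct)
  case (wt_Gen j X Y a b)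
  then have "a \<noteq> 0" using nth_mem by fastforce
  with wt_Gen show ?case by (simp add: fst_fdeg_Gen)
qed (simp_all add: fst_fdeg_FComp fst_fdeg_FTens add_mono)

lemma DS_mor_gen_count_le:
  assumes "DS_mor D SA VA SB VB tr out l" and "s \<in> SA" and "j < length (VB (tr s))"
    and "\<forall>v\<in>set (VA s). (case v of (X, Y, a, b) \<Rightarrow> a \<noteq> 0)"
  shows "gen_count i (out s j) \<le> fst (snd (snd (VB (tr s) ! j)))"
proof -
  obtain X' Y' a' b' where v: "VB (tr s) ! j = (X', Y', a', b')"
    by (cases "VB (tr s) ! j") auto
  from assms(1)[unfolded DS_mor_def, THEN bspec, OF assms(2), THEN conjunct2, rule_format,
      OF assms(3)] v
  have "wt D (VA s) (out s j) X' Y'" and "fst (fdeg D (VA s) (out s j)) \<le> a'"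
    by (simp_all add: lin_le_def)
  with assms(4) v show ?thesis
    using gen_count_le_fst_fdeg[of D "VA s" "out s j" X' Y' i] by simp
qed

theorem proposition3p11:
  fixes D :: "('o, 'm) fcat"
    and HomXY :: "'c set" and degC :: "'c \<Rightarrow> nat"
    and SX :: "'s set" and VX :: "'s \<Rightarrow> 'o var list"
    and SY :: "'t set" and VY :: "'t \<Rightarrow> 'o var list"
    and Ftr :: "'c \<Rightarrow> 's \<Rightarrow> 't" and Fout :: "'c \<Rightarrow> 's \<Rightarrow> nat \<Rightarrow> 'm fterm"
    and aux outs :: "('o \<times> 'o) list"
  assumes T: "transducer D HomXY degC SX VX SY VY Ftr Fout aux outs"
    and finY: "finite SY"
    and nz: "\<forall>s\<in>SX. \<forall>v\<in>set (VX s). (case v of (X, Y, a, b) \<Rightarrow> a \<noteq> 0)"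
  shows "\<exists>k::nat. \<forall>s\<in>SX. \<forall>\<alpha>\<in>HomXY. \<forall>j < length outs. \<forall>i < length aux.
           gen_count i (Fout \<alpha> s j) \<le> k"
proof -
  let ?a = "\<lambda>(t, j). fst (snd (snd (VY t ! j)))"
  have "finite (?a ` (SY \<times> {..<length outs}))"
    using finY by simp
  then obtain k where k: "\<And>t j. t \<in> SY \<Longrightarrow> j < length outs \<Longrightarrow> ?a (t, j) \<le> k"
    unfolding finite_nat_set_iff_bounded_le by blast
  have "gen_count i (Fout \<alpha> s j) \<le> k"
    if s: "s \<in> SX" and \<alpha>: "\<alpha> \<in> HomXY" and j: "j < length outs" for s \<alpha> j i
  proof -
    from T \<alpha> obtain l where F\<alpha>: "DS_mor D SX VX SY VY (Ftr \<alpha>) (Fout \<alpha>) l"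
      unfolding transducer_def by blast
    with s have t: "Ftr \<alpha> s \<in> SY"
      unfolding DS_mor_def by blast
    with T have "prefix outs (map sig_of (VY (Ftr \<alpha> s)))"
      unfolding transducer_def by blast
    with j have "j < length (VY (Ftr \<alpha> s))"
      using prefix_length_le by fastforce
    with F\<alpha> s nz have "gen_count i (Fout \<alpha> s j) \<le> ?a (Ftr \<alpha> s, j)"
      using DS_mor_gen_count_le by fastforce
    with k t j show ?thesis by fastforce
  qed
  then show ?thesis by blast
qed

end
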